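(* Let $\mathbf P=(P,\leq,{}',0,1)$ be an orthogonal orthocomplemented lub-complete poset. Then the following conditions are equivalent: (i) $\mathbf P$ is a Boolean algebra. (ii) There exists a binary operator $\odot_C$ such that $x\odot_C y\leq_1 z$ if and only if $x\leq_2 y\rightarrow_C z$ for all $x,y,z\in P$.
   Context: $(P,\leq,{}',0,1)$ is a bounded poset with an antitone involution ${}'$; orthogonal means $x\leq y'$ implies $x\vee y$ exists; orthocomplemented means $x\vee x'=1$ for all $x$; lub-complete means for every lower bound $x$ of a finite subset $M$ there is a maximal lower bound of $M$ above $x$. For $A\subseteq P$, $U(A)$ is the set of upper bounds, $U(x,y)=U(\{x,y\})$, $\mathrm{Min}\,A$ is the set of minimal elements of $A$. The classical implication is $x\rightarrow_C y:=\mathrm{Min}\,U(x',y)\subseteq P$. The operator $\odot_C$ is a map $P^2\to 2^P$ (elements identified with singletons). For $A,B\subseteq P$: $A\leq_1 B$ means for every $x\in A$ there is $y\in B$ with $x\leq y$; $A\leq_2 B$ means for every $y\in B$ there is $x\in A$ with $x\leq y$. *)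

theory Defs
  imports Main
begin

text \<open>The poset is the whole type 'a with its order; the antitone involution is c,
  the bounds are zero and one.\<close>

definition UB :: "'a::order set \<Rightarrow> 'a set" where
  "UB A = {z. \<forall>a\<in>A. a \<le> z}"

definition LB :: "'a::order set \<Rightarrow> 'a set" where
  "LB A = {z. \<forall>a\<in>A. z \<le> a}"

definition MinS :: "'a::order set \<Rightarrow> 'a set" where
  "MinS A = {x\<in>A. \<forall>y\<in>A. y \<le> x \<longrightarrow> y = x}"

definition MaxS :: "'a::order set \<Rightarrow> 'a set" where
  "MaxS A = {x\<in>A. \<forall>y\<in>A. x \<le> y \<longrightarrow> y = x}"

definition is_sup :: "'a::order \<Rightarrow> 'a \<Rightarrow> 'a \<Rightarrow> bool" where
  "is_sup x y s \<longleftrightarrow> s \<in> UB {x, y} \<and> (\<forall>w\<in>UB {x, y}. s \<le> w)"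

definition is_inf :: "'a::order \<Rightarrow> 'a \<Rightarrow> 'a \<Rightarrow> bool" where
  "is_inf x y s \<longleftrightarrow> s \<in> LB {x, y} \<and> (\<forall>w\<in>LB {x, y}. w \<le> s)"

definition join :: "'a::order \<Rightarrow> 'a \<Rightarrow> 'a" where
  "join x y = (THE s. is_sup x y s)"

definition meet :: "'a::order \<Rightarrow> 'a \<Rightarrow> 'a" where
  "meet x y = (THE s. is_inf x y s)"

definition bounded_inv_poset :: "('a::order \<Rightarrow> 'a) \<Rightarrow> 'a \<Rightarrow> 'a \<Rightarrow> bool" where
  "bounded_inv_poset c zero one \<longleftrightarrow>
     (\<forall>x. zero \<le> x \<and> x \<le> one) \<and>
     (\<forall>x y. x \<le> y \<longrightarrow> c y \<le> c x) \<and> (\<forall>x. c (c x) = x)"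

definition orthogonal :: "('a::order \<Rightarrow> 'a) \<Rightarrow> bool" where
  "orthogonal c \<longleftrightarrow> (\<forall>x y. x \<le> c y \<longrightarrow> (\<exists>s. is_sup x y s))"

definition orthocomplemented :: "('a::order \<Rightarrow> 'a) \<Rightarrow> 'a \<Rightarrow> bool" where
  "orthocomplemented c one \<longleftrightarrow> (\<forall>x. is_sup x (c x) one)"

definition lub_complete :: "'a::order itself \<Rightarrow> bool" where
  "lub_complete _ \<longleftrightarrow>
     (\<forall>M::'a set. finite M \<longrightarrow> (\<forall>x\<in>LB M. \<exists>y\<in>MaxS (LB M). x \<le> y))"

definition boolean_alg :: "('a::order \<Rightarrow> 'a) \<Rightarrow> 'a \<Rightarrow> 'a \<Rightarrow> bool" where
  "boolean_alg c zero one \<longleftrightarrow>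
     (\<forall>x y::'a. (\<exists>s. is_sup x y s) \<and> (\<exists>i. is_inf x y i)) \<and>
     (\<forall>x y z::'a. join x (meet y z) = meet (join x y) (join x z)) \<and>
     (\<forall>x. join x (c x) = one \<and> meet x (c x) = zero)"

definition implC :: "('a::order \<Rightarrow> 'a) \<Rightarrow> 'a \<Rightarrow> 'a \<Rightarrow> 'a set" where
  "implC c x y = MinS (UB {c x, y})"

definition leq1 :: "'a::order set \<Rightarrow> 'a set \<Rightarrow> bool" where
  "leq1 A B \<longleftrightarrow> (\<forall>x\<in>A. \<exists>y\<in>B. x \<le> y)"

definition leq2 :: "'a::order set \<Rightarrow> 'a set \<Rightarrow> bool" where
  "leq2 A B \<longleftrightarrow> (\<forall>y\<in>B. \<exists>x\<in>A. x \<le> y)"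

end

theory Submission
  imports Defs
begin

text \<open>If \<open>\<odot>\<close> is left adjoint to \<open>\<rightarrow>\<^sub>C\<close> and \<open>a\<close>, \<open>b\<close> have no nonzero
  common lower bound, then every element of \<open>a \<odot> b\<close> lies below both \<open>a\<close> and \<open>a'\<close>,
  hence below \<open>0\<close>, and the adjunction yields \<open>a \<le> b'\<close>. With orthogonality this makes
  every maximal lower bound of \<open>{x, y}\<close> an infimum, so by lub-completeness \<open>P\<close> is a
  lattice; and an ortholattice in which disjoint elements are orthogonal satisfies
  \<open>x \<sqinter> y \<le> z \<longleftrightarrow> x \<le> y' \<squnion> z\<close>, which forces distributivity. Conversely, in a
  Boolean algebra \<open>y \<rightarrow>\<^sub>C z = {y' \<squnion> z}\<close>, so \<open>x \<odot> y = {x \<sqinter> y}\<close> is the required adjoint.\<close>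

lemma is_sup_join: "is_sup x y s \<Longrightarrow> join x y = s"
  unfolding join_def
  by (rule the_equality) (auto simp: is_sup_def UB_def intro: antisym)

lemma is_inf_meet: "is_inf x y s \<Longrightarrow> meet x y = s"
  unfolding meet_def
  by (rule the_equality) (auto simp: is_inf_def LB_def intro: antisym)

lemma MinS_UB_is_sup: "is_sup x y s \<Longrightarrow> MinS (UB {x, y}) = {s}"
  unfolding MinS_def is_sup_def by (auto intro: antisym)

locale involution_poset =
  fixes c :: "'a::order \<Rightarrow> 'a" and zero one :: 'a
  assumes bounded_inv_poset: "bounded_inv_poset c zero one"
begin

lemma zero_le: "zero \<le> x" and le_one: "x \<le> one"
  and compl_antitone: "x \<le> y \<Longrightarrow> c y \<le> c x" and compl_compl [simp]: "c (c x) = x"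
  using bounded_inv_poset unfolding bounded_inv_poset_def by auto

lemma compl_le_swap: "c x \<le> y \<longleftrightarrow> c y \<le> x"
  by (metis compl_antitone compl_compl)

lemma le_compl_swap: "x \<le> c y \<longleftrightarrow> y \<le> c x"
  by (metis compl_antitone compl_compl)

lemma compl_eq_one_iff [simp]: "c x = one \<longleftrightarrow> x = zero"
  by (metis compl_antitone compl_compl antisym zero_le le_one)

lemma le_zero_iff: "x \<le> zero \<longleftrightarrow> x = zero"
  using zero_le antisym by blast

lemma is_sup_if_is_inf_compl:
  assumes "is_inf (c x) (c y) m"
  shows "is_sup x y (c m)"
proof -
  have "m \<le> c x" "m \<le> c y" and greatest: "\<And>w. w \<le> c x \<Longrightarrow> w \<le> c y \<Longrightarrow> w \<le> m"
    using assms unfolding is_inf_def LB_def by auto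
  then have "x \<le> c m" "y \<le> c m"
    by (simp_all only: le_compl_swap)
  moreover have "c m \<le> w" if "x \<le> w" "y \<le> w" for w
    using greatest[of "c w"] that compl_antitone compl_le_swap by blast
  ultimately show ?thesis
    unfolding is_sup_def UB_def by auto
qed

end

locale involution_lattice = involution_poset c zero one
  for c :: "'a::order \<Rightarrow> 'a" and zero one +
  assumes sup_exists: "\<exists>s. is_sup (x::'a) y s" and inf_exists: "\<exists>i. is_inf (x::'a) y i"
begin

lemma is_sup_join_self: "is_sup (x::'a) y (join x y)"
  using sup_exists is_sup_join by blast

lemma is_inf_meet_self: "is_inf (x::'a) y (meet x y)"
  using inf_exists is_inf_meet by blast

lemma join_le_iff: "join (x::'a) y \<le> w \<longleftrightarrow> x \<le> w \<and> y \<le> w"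
  using is_sup_join_self[of x y] unfolding is_sup_def UB_def by (blast intro: order_trans)

lemma le_meet_iff: "w \<le> meet (x::'a) y \<longleftrightarrow> w \<le> x \<and> w \<le> y"
  using is_inf_meet_self[of x y] unfolding is_inf_def LB_def by (blast intro: order_trans)

lemma join_ge1: "(x::'a) \<le> join x y" and join_ge2: "y \<le> join x y"
  using join_le_iff by blast+

lemma meet_le1: "meet (x::'a) y \<le> x" and meet_le2: "meet x y \<le> y"
  using le_meet_iff by blast+

lemma meet_mono: "(x::'a) \<le> x' \<Longrightarrow> y \<le> y' \<Longrightarrow> meet x y \<le> meet x' y'"
  using le_meet_iff meet_le1 meet_le2 order_trans by metis

lemma meet_assoc: "meet (meet (x::'a) y) z = meet x (meet y z)"
  by (rule antisym) (meson le_meet_iff order_refl)+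

lemma compl_join: "c (join x y) = meet (c x) (c y)"
proof (rule antisym)
  show "c (join x y) \<le> meet (c x) (c y)"
    by (simp add: le_meet_iff compl_antitone join_ge1 join_ge2)
  have "join x y \<le> c (meet (c x) (c y))"
    by (metis join_le_iff le_compl_swap meet_le1 meet_le2)
  then show "meet (c x) (c y) \<le> c (join x y)"
    by (metis le_compl_swap)
qed

lemma join_comm: "join (x::'a) y = join y x"
  by (rule antisym) (simp_all add: join_le_iff join_ge1 join_ge2)

lemma join_zero: "join x zero = x"
  by (rule antisym) (simp_all add: join_le_iff zero_le join_ge1)

lemma meet_one: "meet x one = x"
  by (rule antisym) (simp_all add: le_meet_iff le_one meet_le1)

lemma implC_eq_join: "implC c y z = {join (c y) z}"
  unfolding implC_def by (rule MinS_UB_is_sup[OF is_sup_join_self])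

end

locale boolean_lattice = involution_lattice +
  assumes meet_compl: "meet x (c x) = zero"
    and disjoint_le_compl: "meet x y = zero \<Longrightarrow> x \<le> c y"
begin

lemma meet_le_iff_le_join_compl: "meet x y \<le> z \<longleftrightarrow> x \<le> join (c y) z"
proof
  assume le_z: "meet x y \<le> z"
  have "meet x (c (join (c y) z)) = meet (meet x y) (c z)"
    by (simp add: compl_join meet_assoc)
  also have "\<dots> \<le> meet z (c z)"
    using le_z order_refl by (rule meet_mono)
  finally have "meet x (c (join (c y) z)) = zero"
    by (simp add: meet_compl le_zero_iff)
  then have "x \<le> c (c (join (c y) z))"
    by (rule disjoint_le_compl)
  then show "x \<le> join (c y) z"
    by simp
next
  assume le_join: "x \<le> join (c y) z"
  have "meet (meet x y) (c z) = meet x (c (join (c y) z))"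
    by (simp add: compl_join meet_assoc)
  also have "\<dots> \<le> meet (join (c y) z) (c (join (c y) z))"
    using le_join order_refl by (rule meet_mono)
  finally have "meet (meet x y) (c z) = zero"
    by (simp add: meet_compl le_zero_iff)
  then have "meet x y \<le> c (c z)"
    by (rule disjoint_le_compl)
  then show "meet x y \<le> z"
    by simp
qed

lemma join_meet_distrib: "join (x::'a) (meet y z) = meet (join x y) (join x z)"
proof (rule antisym)
  have "meet y z \<le> join x y" "meet y z \<le> join x z"
    using order_trans[OF meet_le1 join_ge2] order_trans[OF meet_le2 join_ge2] by blast+
  then show "join x (meet y z) \<le> meet (join x y) (join x z)"
    by (simp add: join_le_iff le_meet_iff join_ge1)
  let ?q = "meet (join x y) (join x z)"
  have "meet ?q (c x) \<le> y" "meet ?q (c x) \<le> z"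
    using meet_le_iff_le_join_compl[of ?q "c x"] meet_le1 meet_le2 by simp_all
  then have "meet ?q (c x) \<le> meet y z"
    by (simp add: le_meet_iff)
  then show "?q \<le> join x (meet y z)"
    using meet_le_iff_le_join_compl[of ?q "c x"] by simp
qed

lemma join_compl: "join x (c x) = one"
proof -
  have "c (join x (c x)) = zero"
    using meet_compl[of "c x"] by (simp add: compl_join)
  then show ?thesis
    by (metis compl_compl compl_eq_one_iff)
qed

lemma boolean_alg: "boolean_alg c zero one"
  unfolding boolean_alg_def
  using sup_exists inf_exists join_meet_distrib join_compl meet_compl by blast

end

context involution_lattice
begin

lemma boolean_lattice_if_boolean_alg:
  assumes "boolean_alg c zero one"
  shows "boolean_lattice c zero one"
proof
  have distrib: "join x (meet y z) = meet (join x y) (join x z)"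
    and join_compl: "join x (c x) = one" and meet_compl: "meet x (c x) = zero" for x y z
    using assms unfolding boolean_alg_def by blast+
  show "meet x (c x) = zero" for x
    by (rule meet_compl)
  show "x \<le> c y" if "meet x y = zero" for x y
  proof -
    have "c y = meet (join (c y) x) (join (c y) y)"
      using distrib[of "c y" x y] by (simp add: that join_zero)
    also have "\<dots> = join (c y) x"
      using join_compl[of y] by (simp add: join_comm meet_one)
    finally show ?thesis
      by (metis join_ge2)
  qed
qed

end

locale orthogonal_lub_complete_poset = involution_poset c zero one
  for c :: "'a::order \<Rightarrow> 'a" and zero one +
  assumes orthogonal: "orthogonal c"
    and orthocomplemented: "orthocomplemented c one"
    and lub_complete: "lub_complete TYPE('a)"
begin

lemma eq_zero_if_le_both:
  assumes "x \<le> v" and "x \<le> c v"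
  shows "x = zero"
proof -
  have "v \<le> c x" "c v \<le> c x"
    using assms by (simp_all add: compl_antitone le_compl_swap[of x v])
  then have "one \<le> c x"
    using orthocomplemented unfolding orthocomplemented_def is_sup_def UB_def by auto
  then show ?thesis
    using le_one antisym compl_eq_one_iff by blast
qed

text \<open>The maximal lower bound \<open>m\<close> is an infimum: if \<open>v \<le> w, m'\<close> for a lower bound \<open>w\<close>,
  orthogonality supplies \<open>v \<squnion> m\<close>, a lower bound above \<open>m\<close>, so \<open>v \<le> m\<close> and \<open>v = 0\<close>.\<close>

lemma is_inf_if_MaxS_LB:
  assumes disjoint_le_compl: "\<And>a b. (\<And>v. v \<le> a \<Longrightarrow> v \<le> b \<Longrightarrow> v = zero) \<Longrightarrow> a \<le> c b"
    and m: "m \<in> MaxS (LB {x::'a, y})"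
  shows "is_inf x y m"
proof -
  have mx: "m \<le> x" and my: "m \<le> y"
    and m_max: "\<And>t. t \<le> x \<Longrightarrow> t \<le> y \<Longrightarrow> m \<le> t \<Longrightarrow> t = m"
    using m unfolding MaxS_def LB_def by auto
  have "w \<le> m" if wx: "w \<le> x" and wy: "w \<le> y" for w
  proof -
    have "w \<le> c (c m)"
    proof (rule disjoint_le_compl)
      fix v assume vw: "v \<le> w" and vm: "v \<le> c m"
      then obtain s where s: "is_sup v m s"
        using orthogonal unfolding orthogonal_def by blast
      then have "v \<le> s" and "m \<le> s" and s_least: "\<And>t. v \<le> t \<Longrightarrow> m \<le> t \<Longrightarrow> s \<le> t"
        unfolding is_sup_def UB_def by auto
      have "s \<le> x" "s \<le> y"
        using s_least vw wx wy mx my order_trans by metis+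
      then have "s = m"
        using \<open>m \<le> s\<close> by (rule m_max)
      then have "v \<le> m"
        using \<open>v \<le> s\<close> by simp
      then show "v = zero"
        using vm by (rule eq_zero_if_le_both)
    qed
    then show ?thesis
      by simp
  qed
  then show ?thesis
    unfolding is_inf_def LB_def using mx my by auto
qed

lemma inf_exists_if_disjoint_le_compl:
  assumes "\<And>a b. (\<And>v. v \<le> a \<Longrightarrow> v \<le> b \<Longrightarrow> v = zero) \<Longrightarrow> a \<le> c b"
  shows "\<exists>m. is_inf (x::'a) y m"
proof -
  have "zero \<in> LB {x, y}"
    unfolding LB_def by (simp add: zero_le)
  then obtain m where "m \<in> MaxS (LB {x, y})"
    using lub_complete unfolding lub_complete_def by (meson finite.emptyI finite.insertI)
  then show ?thesis
    using assms is_inf_if_MaxS_LB by blast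
qed

context
  fixes odot :: "'a \<Rightarrow> 'a \<Rightarrow> 'a set"
  assumes adjoint: "\<And>x y z. leq1 (odot x y) {z} \<longleftrightarrow> leq2 {x} (implC c y z)"
begin

lemma disjoint_le_compl_if_adjoint:
  assumes disjoint: "\<And>v. v \<le> a \<Longrightarrow> v \<le> b \<Longrightarrow> v = zero"
  shows "a \<le> c b"
proof -
  have "leq2 {a} (implC c b a)"
    unfolding leq2_def implC_def MinS_def UB_def by auto
  then have below_a: "leq1 (odot a b) {a}"
    using adjoint by blast
  have "u = one" if "c b \<le> u" "c a \<le> u" for u
    using that disjoint[of "c u"] compl_le_swap compl_eq_one_iff compl_compl by metis
  then have "leq2 {a} (implC c b (c a))"
    unfolding leq2_def implC_def MinS_def UB_def using le_one by auto
  then have below_compl_a: "leq1 (odot a b) {c a}"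
    using adjoint by blast
  have "leq1 (odot a b) {zero}"
    using below_a below_compl_a eq_zero_if_le_both unfolding leq1_def by blast
  then have "leq2 {a} (implC c b zero)"
    using adjoint by blast
  moreover have "implC c b zero = {c b}"
    unfolding implC_def by (rule MinS_UB_is_sup) (simp add: is_sup_def UB_def zero_le)
  ultimately show ?thesis
    unfolding leq2_def by simp
qed

lemma involution_lattice_if_adjoint: "involution_lattice c zero one"
proof
  show inf: "\<exists>m. is_inf x y m" for x y :: 'a
    using disjoint_le_compl_if_adjoint by (rule inf_exists_if_disjoint_le_compl)
  show "\<exists>s. is_sup x y s" for x y :: 'a
    using inf[of "c x" "c y"] is_sup_if_is_inf_compl by blast
qed

lemma boolean_alg_if_adjoint: "boolean_alg c zero one"
proof -
  interpret involution_lattice c zero one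
    by (rule involution_lattice_if_adjoint)
  interpret boolean_lattice c zero one
  proof
    show "meet x (c x) = zero" for x
      using meet_le1 meet_le2 by (rule eq_zero_if_le_both)
    show "x \<le> c y" if "meet x y = zero" for x y
      using disjoint_le_compl_if_adjoint le_meet_iff le_zero_iff that by metis
  qed
  show ?thesis
    by (rule boolean_alg)
qed

end

end

theorem proposition3:
  fixes c :: "'a::order \<Rightarrow> 'a" and zero one :: 'a
  assumes "bounded_inv_poset c zero one"
    and "orthogonal c"
    and "orthocomplemented c one"
    and "lub_complete TYPE('a)"
  shows "boolean_alg c zero one \<longleftrightarrow>
    (\<exists>odot :: 'a \<Rightarrow> 'a \<Rightarrow> 'a set. \<forall>x y z.
        leq1 (odot x y) {z} \<longleftrightarrow> leq2 {x} (implC c y z))"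
proof
  assume boolean: "boolean_alg c zero one"
  interpret involution_lattice c zero one
    using assms(1) boolean unfolding boolean_alg_def by unfold_locales blast+
  interpret boolean_lattice c zero one
    using boolean by (rule boolean_lattice_if_boolean_alg)
  show "\<exists>odot. \<forall>x y z. leq1 (odot x y) {z} \<longleftrightarrow> leq2 {x} (implC c y z)"
    by (rule exI[of _ "\<lambda>x y. {meet x y}"])
      (simp add: leq1_def leq2_def implC_eq_join meet_le_iff_le_join_compl)
next
  assume "\<exists>odot. \<forall>x y z. leq1 (odot x y) {z} \<longleftrightarrow> leq2 {x} (implC c y z)"
  then obtain odot where adjoint: "\<And>x y z. leq1 (odot x y) {z} \<longleftrightarrow> leq2 {x} (implC c y z)"
    by blast
  interpret orthogonal_lub_complete_poset c zero one
    using assms by unfold_locales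
  show "boolean_alg c zero one"
    using adjoint by (rule boolean_alg_if_adjoint)
qed

end
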